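(* Let $p\neq 3$ be a prime, $a\in\mathbb{Q}_p$ with $|a|_p<1$, and assume $\sqrt{a^2+4}$ exists in $\mathbb{Q}_p$ (automatic for $p\ge 5$; for $p=2$ equivalent to $|a|_2\le 1/8$). Let $f(x)=x^3+ax^2$ on $\mathbb{Q}_p$ and let $x_\sigma$ ($\sigma=2,3$) be one of the fixed points $x_{2,3}=\frac{-a\pm\sqrt{a^2+4}}{2}$. The following conditions are equivalent: (i) $SI(x_\sigma)=B_1(x_\sigma)$; (ii) there is $\gamma_0\in S_1(0)$ such that $|\gamma_0^2+3x_\sigma\gamma_0+3|_p<1$; (iii) $\sqrt{-3}$ exists in $\mathbb{Q}_p$.
   Context: $\mathbb{Q}_p$ is the field of $p$-adic numbers with norm $|\cdot|_p$. $B_r(c)=\{x:|x-c|_p<r\}$, $S_r(c)=\{x:|x-c|_p=r\}$. A ball $B_r(x^{(0)})$ centered at a fixed point $x^{(0)}$ of $f$ is a Siegel disc if for every $\rho<r$ the sphere $S_\rho(x^{(0)})$ is invariant, i.e. $x\in S_\rho(x^{(0)})$ implies $f^{(n)}(x)\in S_\rho(x^{(0)})$ for all $n\ge1$ ($f^{(n)}$ the $n$-th iterate); $SI(x^{(0)})$, the maximal Siegel disc, is the union of all Siegel discs centered at $x^{(0)}$. *)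

theory Defs
  imports Complex_Main "HOL-Computational_Algebra.Primes"
begin

definition padic_abs_rat :: "nat \<Rightarrow> rat \<Rightarrow> real" where
  "padic_abs_rat p q = (if q = 0 then 0 else
     (case quotient_of q of (n, d) \<Rightarrow>
        real p powr (real (multiplicity (int p) d) - real (multiplicity (int p) n))))"

text \<open>A field of characteristic 0 with a function nv is (an isometric copy of) the
  field of p-adic numbers Q_p with its norm: nv is a non-archimedean absolute value
  extending the p-adic absolute value on Q, the field is complete for nv, and Q is dense.
  These properties determine (Q_p, |.|_p) up to isometric isomorphism.\<close>
definition is_Qp :: "nat \<Rightarrow> ('a::field_char_0 \<Rightarrow> real) \<Rightarrow> bool" where
  "is_Qp p nv \<longleftrightarrow>
     (\<forall>x. 0 \<le> nv x) \<and> (\<forall>x. nv x = 0 \<longleftrightarrow> x = 0) \<and>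
     (\<forall>x y. nv (x * y) = nv x * nv y) \<and>
     (\<forall>x y. nv (x + y) \<le> max (nv x) (nv y)) \<and>
     (\<forall>q. nv (of_rat q) = padic_abs_rat p q) \<and>
     (\<forall>X :: nat \<Rightarrow> 'a. (\<forall>e>0. \<exists>N. \<forall>m\<ge>N. \<forall>n\<ge>N. nv (X m - X n) < e) \<longrightarrow>
          (\<exists>L. \<forall>e>0. \<exists>N. \<forall>n\<ge>N. nv (X n - L) < e)) \<and>
     (\<forall>x e. 0 < e \<longrightarrow> (\<exists>q. nv (x - of_rat q) < e))"

definition pball :: "('a::ab_group_add \<Rightarrow> real) \<Rightarrow> real \<Rightarrow> 'a \<Rightarrow> 'a set" where
  "pball nv r c = {x. nv (x - c) < r}"

definition psphere :: "('a::ab_group_add \<Rightarrow> real) \<Rightarrow> real \<Rightarrow> 'a \<Rightarrow> 'a set" where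
  "psphere nv r c = {x. nv (x - c) = r}"

definition siegel_disc :: "('a::ab_group_add \<Rightarrow> real) \<Rightarrow> ('a \<Rightarrow> 'a) \<Rightarrow> 'a \<Rightarrow> real \<Rightarrow> bool" where
  "siegel_disc nv f x0 r \<longleftrightarrow> f x0 = x0 \<and>
     (\<forall>\<rho><r. \<forall>x\<in>psphere nv \<rho> x0. \<forall>n\<ge>1. (f ^^ n) x \<in> psphere nv \<rho> x0)"

definition SI :: "('a::ab_group_add \<Rightarrow> real) \<Rightarrow> ('a \<Rightarrow> 'a) \<Rightarrow> 'a \<Rightarrow> 'a set" where
  "SI nv f x0 = \<Union> {pball nv r x0 | r. siegel_disc nv f x0 r}"

end

theory Submission
  imports Defs "HOL-Number_Theory.Cong"
begin

text \<open>
  Writing \<open>h = x - x\<^sub>\<sigma>\<close>, one has \<open>f x - x\<^sub>\<sigma> = h G(h)\<close> with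
  \<open>G(h) = Q(h) + a (h - x\<^sub>\<sigma>)\<close> and \<open>Q(h) = h\<^sup>2 + 3 x\<^sub>\<sigma> h + 3\<close>. Since \<open>|a| < 1\<close> and
  \<open>|x\<^sub>\<sigma>| = 1\<close>, \<open>|G(h)| = 1\<close> whenever \<open>|h| < 1\<close>, so \<open>B\<^sub>1(x\<^sub>\<sigma>)\<close> is always a Siegel disc, while on
  the unit sphere \<open>f\<close> keeps \<open>x\<close> on the sphere exactly when \<open>|Q(h)| = 1\<close>. As \<open>|.|\<^sub>p\<close> takes no
  values strictly between \<open>1\<close> and \<open>p\<close>, invariance of \<open>S\<^sub>1(x\<^sub>\<sigma>)\<close> would make \<open>B\<^sub>p(x\<^sub>\<sigma>)\<close> a
  Siegel disc; hence \<open>SI(x\<^sub>\<sigma>) = B\<^sub>1(x\<^sub>\<sigma>)\<close> iff (ii).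

  Completing the square, \<open>(2\<gamma> + 3x\<^sub>\<sigma>)\<^sup>2 + 3 = 4 Q(\<gamma>) - 9 a x\<^sub>\<sigma>\<close>, so for \<open>p \<noteq> 2\<close> condition (ii)
  says that \<open>-3\<close> is a square modulo \<open>p\<close>, which by Hensel's lemma is (iii). For \<open>p = 2\<close> both fail:
  units of \<open>\<int>\<^sub>2\<close> are \<open>1\<close> mod \<open>2\<close>, making \<open>Q(\<gamma>)\<close> a unit, and their squares are \<open>1\<close> mod \<open>8\<close>,
  whereas \<open>-3\<close> is not.
\<close>

section \<open>Non-archimedean absolute values\<close>

locale nonarch_abs =
  fixes nv :: "'a::field \<Rightarrow> real"
  assumes nv_nonneg: "0 \<le> nv x"
    and nv_eq_0_iff: "nv x = 0 \<longleftrightarrow> x = 0"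
    and nv_mult: "nv (x * y) = nv x * nv y"
    and nv_add_le_max: "nv (x + y) \<le> max (nv x) (nv y)"
begin

lemma nv_0 [simp]: "nv 0 = 0"
  using nv_eq_0_iff by simp

lemma nv_1 [simp]: "nv 1 = 1"
  using nv_mult[of 1 1] nv_eq_0_iff[of 1] by simp

lemma nv_minus [simp]: "nv (- x) = nv x"
proof -
  have "nv (- 1) ^ 2 = 1"
    using nv_mult[of "- 1" "- 1"] by (simp add: power2_eq_square)
  then have "nv (- 1) = 1"
    using nv_nonneg[of "- 1"] by (simp add: power2_eq_1_iff)
  then show ?thesis
    using nv_mult[of "- 1" x] by simp
qed

lemma nv_minus_commute: "nv (x - y) = nv (y - x)"
  using nv_minus[of "x - y"] by simp

lemma nv_power: "nv (x ^ n) = nv x ^ n"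
  by (induction n) (simp_all add: nv_mult)

lemma nv_divide: "nv (x / y) = nv x / nv y"
proof (cases "y = 0")
  case False
  then show ?thesis
    using nv_mult[of "x / y" y] nv_eq_0_iff[of y] by (simp add: field_simps)
qed simp

lemma nv_mult_unit_left: "nv u = 1 \<Longrightarrow> nv (u * x) = nv x"
  by (simp add: nv_mult)

lemma nv_add_le: "nv x \<le> c \<Longrightarrow> nv y \<le> c \<Longrightarrow> nv (x + y) \<le> c"
  using nv_add_le_max[of x y] by linarith

lemma nv_add_less: "nv x < c \<Longrightarrow> nv y < c \<Longrightarrow> nv (x + y) < c"
  using nv_add_le_max[of x y] by linarith

lemma nv_diff_le: "nv x \<le> c \<Longrightarrow> nv y \<le> c \<Longrightarrow> nv (x - y) \<le> c"
  using nv_add_le[of x c "- y"] by simp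

lemma nv_diff_less: "nv x < c \<Longrightarrow> nv y < c \<Longrightarrow> nv (x - y) < c"
  using nv_add_less[of x c "- y"] by simp

lemma nv_mult_le: "nv x \<le> 1 \<Longrightarrow> nv y \<le> c \<Longrightarrow> nv (x * y) \<le> c"
  using mult_left_le_one_le[of "nv y" "nv x"] nv_nonneg[of x] nv_nonneg[of y] by (simp add: nv_mult)

lemma nv_add_right_dominant: "nv x < nv y \<Longrightarrow> nv (x + y) = nv y"
proof -
  assume less: "nv x < nv y"
  have "nv y \<le> max (nv (x + y)) (nv (- x))"
    using nv_add_le_max[of "x + y" "- x"] by simp
  then show ?thesis
    using nv_add_le_max[of x y] less by (auto simp: max_def split: if_splits)
qed

lemma nv_add_left_dominant: "nv y < nv x \<Longrightarrow> nv (x + y) = nv x"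
  using nv_add_right_dominant[of y x] by (simp add: add.commute)

lemma nv_eq_if_close: "nv (x - y) < nv y \<Longrightarrow> nv x = nv y"
  using nv_add_right_dominant[of "x - y" y] by simp

lemma nv_less_1_iff_if_close: "nv (x - y) < 1 \<Longrightarrow> nv x < 1 \<longleftrightarrow> nv y < 1"
  using nv_diff_less[of y 1 "y - x"] nv_diff_less[of x 1 "x - y"] nv_minus_commute[of x y] by auto

lemma eq_0_if_nv_arbitrarily_small: "(\<And>e. 0 < e \<Longrightarrow> nv x < e) \<Longrightarrow> x = 0"
  using nv_nonneg[of x] nv_eq_0_iff[of x] by (metis less_irrefl order_le_less)

lemma nv_of_int_le_1: "nv (of_int n) \<le> 1"
proof -
  have "nv (of_nat k) \<le> 1" for k
    by (induction k) (simp_all add: nv_add_le)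
  then show ?thesis
    by (cases n rule: int_cases) (simp_all del: of_nat_Suc)
qed

lemma nv_eq_1_if_nv_square: "nv (x ^ 2) = 1 \<Longrightarrow> nv x = 1"
  using nv_nonneg[of x] by (simp add: nv_power power2_eq_1_iff)

lemma nv_eq_1_if_square_plus_mult_eq_1:
  assumes root: "x ^ 2 + a * x = 1" and small: "nv a < 1"
  shows "nv x = 1"
proof (rule ccontr)
  have prod: "nv x * nv (x + a) = 1"
    using arg_cong[OF root, of nv] by (simp add: nv_mult[symmetric] algebra_simps power2_eq_square)
  assume "nv x \<noteq> 1"
  then consider "nv x < 1" | "1 < nv x"
    by linarith
  then show False
  proof cases
    case 1
    then have "nv (x + a) < 1"
      using small by (rule nv_add_less)
    moreover have "nv x * nv (x + a) \<le> nv (x + a)"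
      using 1 nv_nonneg by (intro mult_left_le_one_le) auto
    ultimately show False
      using prod by linarith
  next
    case 2
    then have "nv (x + a) = nv x"
      using small by (intro nv_add_left_dominant) simp
    then show False
      using prod less_1_mult[OF 2 2] by simp
  qed
qed

lemma nv_monic_quadratic_le_1:
  "nv b \<le> 1 \<Longrightarrow> nv c \<le> 1 \<Longrightarrow> nv x \<le> 1 \<Longrightarrow> nv (x ^ 2 + b * x + c) \<le> 1"
  by (intro nv_add_le nv_mult_le) (simp_all add: nv_power power_le_one nv_nonneg)

lemma nv_monic_quadratic_eq_1:
  assumes "nv b \<le> 1" "nv c = 1" "nv x < 1"
  shows "nv (x ^ 2 + b * x + c) = 1"
proof -
  have "nv (x ^ 2) < 1"
    using assms(3) nv_nonneg[of x] by (simp add: nv_power power_less_one_iff)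
  moreover have "nv (b * x) < 1"
    using assms(1,3) nv_mult_le[of b x "nv x"] by simp
  ultimately have "nv (x ^ 2 + b * x) < nv c"
    using assms(2) by (simp add: nv_add_less)
  then show ?thesis
    using nv_add_right_dominant assms(2) by simp
qed

lemma nv_eq_1_if_monic_quadratic_less_1:
  assumes b: "nv b \<le> 1" and c: "nv c = 1" and root: "nv (x ^ 2 + b * x + c) < 1"
  shows "nv x = 1"
proof (rule ccontr)
  assume "nv x \<noteq> 1"
  then consider "nv x < 1" | "1 < nv x" by linarith
  then show False
  proof cases
    case 1
    then show False using nv_monic_quadratic_eq_1[OF b c] root by simp
  next
    case 2
    have "nv (b * x + c) \<le> nv x"
      using b c 2 nv_mult_le[of b x "nv x"] by (intro nv_add_le) simp_all
    also have "nv x < nv (x ^ 2)"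
      unfolding nv_power using mult_strict_left_mono[of 1 "nv x" "nv x"] 2 by (simp add: power2_eq_square)
    finally have "nv (x ^ 2 + (b * x + c)) = nv (x ^ 2)"
      by (rule nv_add_left_dominant)
    moreover have "1 < nv (x ^ 2)"
      unfolding nv_power using less_1_mult[OF 2 2] by (simp add: power2_eq_square)
    ultimately show False
      using root by (simp add: add.assoc)
  qed
qed

end

section \<open>Hensel's lemma for square roots\<close>

context nonarch_abs
begin

definition nv_tendsto :: "(nat \<Rightarrow> 'a) \<Rightarrow> 'a \<Rightarrow> bool" where
  "nv_tendsto z L \<longleftrightarrow> (\<forall>e>0. \<exists>N. \<forall>n\<ge>N. nv (z n - L) < e)"

lemma nv_tendsto_if_le_power:
  assumes bound: "\<And>n. nv (z n - L) \<le> t ^ n" and t: "0 \<le> t" "t < 1"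
  shows "nv_tendsto z L"
  unfolding nv_tendsto_def
proof (intro allI impI)
  fix e :: real
  assume "0 < e"
  then obtain N where N: "t ^ N < e"
    using real_arch_pow_inv t(2) by blast
  have "nv (z n - L) < e" if "N \<le> n" for n
    using bound[of n] power_decreasing[OF that t(1)] t(2) N by linarith
  then show "\<exists>N. \<forall>n\<ge>N. nv (z n - L) < e"
    by blast
qed

lemma square_eq_if_nv_tendsto:
  assumes z: "nv_tendsto z L" and square: "nv_tendsto (\<lambda>n. z n ^ 2) c"
    and bounded: "\<And>n. nv (z n) \<le> 1"
  shows "L ^ 2 = c"
proof -
  have "nv (L ^ 2 - c) < e" if e: "0 < e" for e
  proof -
    have "0 < min e 1"
      using e by simp
    then obtain N1 where N1: "\<forall>n\<ge>N1. nv (z n - L) < min e 1"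
      using z unfolding nv_tendsto_def by blast
    obtain N2 where N2: "\<forall>n\<ge>N2. nv (z n ^ 2 - c) < e"
      using square e unfolding nv_tendsto_def by blast
    define n where "n = max N1 N2"
    have near: "nv (z n - L) < min e 1" and err: "nv (z n ^ 2 - c) < e"
      using N1 N2 by (simp_all add: n_def)
    have "nv (z n + z n - (z n - L)) \<le> 1"
      using nv_diff_le[OF nv_add_le[OF bounded[of n] bounded[of n]], of "z n - L"] near by simp
    then have "nv ((z n + L) * (z n - L)) \<le> nv (z n - L)"
      by (intro nv_mult_le) simp_all
    then have "nv ((z n ^ 2 - c) - (z n + L) * (z n - L)) < e"
      using near by (intro nv_diff_less[OF err]) simp
    moreover have "(z n ^ 2 - c) - (z n + L) * (z n - L) = L ^ 2 - c"
      by (simp add: algebra_simps power2_eq_square)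
    ultimately show ?thesis
      by simp
  qed
  then have "L ^ 2 - c = 0"
    by (rule eq_0_if_nv_arbitrarily_small)
  then show ?thesis
    by simp
qed

lemma nv_diff_le_if_steps_le_power:
  assumes steps: "\<And>n. nv (z (Suc n) - z n) \<le> t ^ n" and t: "0 \<le> t" "t \<le> 1"
    and "n \<le> m"
  shows "nv (z m - z n) \<le> t ^ n"
  using \<open>n \<le> m\<close>
proof (induction m rule: dec_induct)
  case (step m)
  have "nv (z (Suc m) - z m) \<le> t ^ n"
    using steps[of m] power_decreasing[OF step.hyps(1) t] by linarith
  then have "nv ((z (Suc m) - z m) + (z m - z n)) \<le> t ^ n"
    using step.IH by (rule nv_add_le)
  then show ?case by simp
qed (use t in simp)

lemma newton_step_sqrt:
  assumes nv_2: "nv 2 = 1" and nv_c: "nv c = 1" and close: "nv (w ^ 2 - c) < 1"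
  defines "w' \<equiv> w - (w ^ 2 - c) / (2 * w)"
  shows "nv w = 1" and "nv (w' ^ 2 - c) = nv (w ^ 2 - c) ^ 2" and "nv (w' - w) = nv (w ^ 2 - c)"
proof -
  have "nv (w ^ 2) = nv c"
    using nv_eq_if_close[of "w ^ 2" c] close nv_c by simp
  then show w: "nv w = 1"
    using nv_eq_1_if_nv_square[of w] nv_c by simp
  have "2 * w \<noteq> 0"
    using w nv_2 by (auto simp: nv_mult)
  then have "2 * w * ((w ^ 2 - c) / (2 * w)) = w ^ 2 - c"
    by simp
  then have "w' ^ 2 - c = ((w ^ 2 - c) / (2 * w)) ^ 2"
    unfolding w'_def power2_diff by (simp add: algebra_simps)
  then show "nv (w' ^ 2 - c) = nv (w ^ 2 - c) ^ 2"
    using nv_2 w by (simp add: nv_divide nv_power nv_mult)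
  have "w' - w = - ((w ^ 2 - c) / (2 * w))"
    unfolding w'_def by simp
  then show "nv (w' - w) = nv (w ^ 2 - c)"
    using nv_2 w by (simp add: nv_divide nv_mult)
qed

end

locale complete_nonarch_abs = nonarch_abs nv for nv :: "'a::field \<Rightarrow> real" +
  assumes complete: "\<And>X :: nat \<Rightarrow> 'a. (\<forall>e>0. \<exists>N. \<forall>m\<ge>N. \<forall>n\<ge>N. nv (X m - X n) < e) \<Longrightarrow>
      \<exists>L. \<forall>e>0. \<exists>N. \<forall>n\<ge>N. nv (X n - L) < e"
begin

lemma convergent_if_steps_le_power:
  assumes steps: "\<And>n. nv (z (Suc n) - z n) \<le> t ^ n" and t: "0 \<le> t" "t < 1"
  shows "\<exists>L. nv_tendsto z L"
  unfolding nv_tendsto_def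
proof (rule complete, intro allI impI)
  fix e :: real
  assume "0 < e"
  then obtain N where N: "t ^ N < e"
    using real_arch_pow_inv t(2) by blast
  have "nv (z m - z n) < e" if "N \<le> m" "N \<le> n" for m n
  proof -
    have "nv (z m - z n) \<le> t ^ min m n"
    proof (cases "n \<le> m")
      case True
      then show ?thesis
        using nv_diff_le_if_steps_le_power[OF steps] t by (simp add: min_def)
    next
      case False
      then show ?thesis
        using nv_diff_le_if_steps_le_power[OF steps, of m n] t nv_minus_commute[of "z m" "z n"]
        by (simp add: min_def)
    qed
    also have "\<dots> \<le> t ^ N"
      using that t by (intro power_decreasing) auto
    finally show ?thesis
      using N by linarith
  qed
  then show "\<exists>N. \<forall>m\<ge>N. \<forall>n\<ge>N. nv (z m - z n) < e"
    by blast
qed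

theorem hensel_sqrt:
  assumes nv_2: "nv 2 = 1" and nv_c: "nv c = 1" and close: "nv (z0 ^ 2 - c) < 1"
  shows "\<exists>y. y ^ 2 = c"
proof -
  define t where "t = nv (z0 ^ 2 - c)"
  have t: "0 \<le> t" "t < 1"
    using close nv_nonneg unfolding t_def by auto
  define z where "z n = ((\<lambda>w. w - (w ^ 2 - c) / (2 * w)) ^^ n) z0" for n
  have z_Suc: "z (Suc n) = z n - (z n ^ 2 - c) / (2 * z n)" for n
    by (simp add: z_def)
  have error: "nv (z n ^ 2 - c) = t ^ 2 ^ n" for n
  proof (induction n)
    case (Suc n)
    have "t ^ 2 ^ n \<le> t"
      using power_decreasing[of 1 "2 ^ n" t] t by simp
    then have "nv (z n ^ 2 - c) < 1"
      using Suc.IH t by linarith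
    moreover have "(t ^ 2 ^ n) ^ 2 = t ^ 2 ^ Suc n"
      by (simp add: power_mult[symmetric] mult.commute)
    ultimately show ?case
      using newton_step_sqrt(2)[OF nv_2 nv_c] Suc.IH by (simp add: z_Suc)
  qed (simp add: z_def t_def)
  have small: "t ^ 2 ^ n \<le> t ^ n" for n
    using t by (intro power_decreasing) (auto intro: less_imp_le less_exp)
  have close_n: "nv (z n ^ 2 - c) < 1" for n
    using error[of n] small[of n] power_decreasing[of 1 "2 ^ n" t] t by simp
  have steps: "nv (z (Suc n) - z n) \<le> t ^ n" for n
    using newton_step_sqrt(3)[OF nv_2 nv_c close_n[of n]] error[of n] small[of n]
    by (simp add: z_Suc)
  obtain L where "nv_tendsto z L"
    using convergent_if_steps_le_power[OF steps t] by blast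
  moreover have "nv_tendsto (\<lambda>n. z n ^ 2) c"
    using nv_tendsto_if_le_power[of "\<lambda>n. z n ^ 2" c t] error small t by simp
  moreover have "nv (z n) \<le> 1" for n
    using newton_step_sqrt(1)[OF nv_2 nv_c close_n[of n]] by simp
  ultimately have "L ^ 2 = c"
    by (rule square_eq_if_nv_tendsto)
  then show ?thesis ..
qed

end

section \<open>The field of \<open>p\<close>-adic numbers\<close>

lemma eight_dvd_odd_square_minus_1:
  fixes m :: int
  assumes "odd m"
  shows "8 dvd m ^ 2 - 1"
proof -
  obtain k where m: "m = 2 * k + 1"
    using assms by (rule oddE)
  have "even (k * (k + 1))"
    by simp
  then obtain j where "k * (k + 1) = 2 * j"
    by blast
  then have "m ^ 2 - 1 = 8 * j"
    unfolding m by (simp add: power2_eq_square algebra_simps)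
  then show ?thesis by simp
qed

locale padic_field = complete_nonarch_abs nv for nv :: "'a::field_char_0 \<Rightarrow> real" +
  fixes p :: nat
  assumes prime: "prime p"
    and nv_of_rat: "nv (of_rat q) = padic_abs_rat p q"
    and dense_rat: "0 < e \<Longrightarrow> \<exists>q. nv (x - of_rat q) < e"

lemma padic_field_if_is_Qp: "is_Qp p nv \<Longrightarrow> prime p \<Longrightarrow> padic_field nv p"
  unfolding is_Qp_def by unfold_locales auto

context padic_field
begin

lemma p_gt_1: "1 < real p"
  using prime_gt_1_nat[OF prime] by simp

lemma nv_of_int_eq_1: "\<not> int p dvd n \<Longrightarrow> nv (of_int n) = 1"
proof -
  assume "\<not> int p dvd n"
  then have "n \<noteq> 0" and "multiplicity (int p) n = 0"
    by (auto intro: not_dvd_imp_multiplicity_0)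
  then show ?thesis
    using nv_of_rat[of "of_int n"] prime_gt_0_nat[OF prime] by (simp add: padic_abs_rat_def)
qed

lemma nv_of_nat_p: "nv (of_nat p) = 1 / real p"
proof -
  have "multiplicity (int p) (int p) = 1"
    using prime by (intro multiplicity_self) (auto dest: prime_elem_not_unit)
  then have "nv (of_nat p) = real p powr - 1"
    using nv_of_rat[of "of_nat p"] prime_gt_0_nat[OF prime] by (simp add: padic_abs_rat_def)
  then show ?thesis
    using p_gt_1 by (simp add: powr_minus_divide)
qed

lemma nv_of_int_le_inverse_p: "int p dvd n \<Longrightarrow> nv (of_int n) \<le> 1 / real p"
proof -
  assume "int p dvd n"
  then obtain k where "n = int p * k" ..
  then have "nv (of_int n) = 1 / real p * nv (of_int k)"
    by (simp add: nv_mult nv_of_nat_p)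
  then show ?thesis
    using nv_of_int_le_1[of k] p_gt_1 by (simp add: divide_right_mono)
qed

lemma nv_numeral_eq_1: "\<not> p dvd numeral k \<Longrightarrow> nv (numeral k) = 1"
  using nv_of_int_eq_1[of "numeral k"] by (metis int_dvd_int_iff of_int_numeral of_nat_numeral)

lemma nv_2_if_p_ne_2: "p \<noteq> 2 \<Longrightarrow> nv 2 = 1"
  using prime_ge_2_nat[OF prime] by (intro nv_numeral_eq_1) (auto dest: dvd_imp_le)

lemma nv_eq_powr_int:
  assumes "x \<noteq> 0"
  shows "\<exists>k::int. nv x = real p powr k"
proof -
  have "0 < nv x"
    using assms nv_nonneg[of x] nv_eq_0_iff[of x] by linarith
  then obtain q where "nv (x - of_rat q) < nv x"
    using dense_rat by blast
  then have nv_q: "nv (of_rat q) = nv x"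
    using nv_eq_if_close[of "of_rat q" x] nv_minus_commute[of x] by simp
  then have "q \<noteq> 0"
    using \<open>0 < nv x\<close> by auto
  obtain n d where nd: "quotient_of q = (n, d)"
    by fastforce
  have "nv x = real p powr of_int (int (multiplicity (int p) d) - int (multiplicity (int p) n))"
    using nv_q nv_of_rat[of q] \<open>q \<noteq> 0\<close> nd by (simp add: padic_abs_rat_def)
  then show ?thesis ..
qed

lemma nv_le_1_if_less_p: "nv x < real p \<Longrightarrow> nv x \<le> 1"
proof (rule ccontr)
  assume less: "nv x < real p" and "\<not> nv x \<le> 1"
  then have "x \<noteq> 0"
    by auto
  then obtain k :: int where k: "nv x = real p powr k"
    using nv_eq_powr_int by blast
  have "real p powr 0 < real p powr k" and "real p powr k < real p powr 1"
    using \<open>\<not> nv x \<le> 1\<close> less p_gt_1 by (simp_all add: k[symmetric])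
  then have "0 < k" and "k < 1"
    using powr_less_cancel_iff[OF p_gt_1] by (metis of_int_0_less_iff, metis of_int_less_1_iff)
  then show False
    by simp
qed

lemma not_dvd_if_close_to_unit:
  assumes "nv u = 1" and "nv (u - of_int m) < 1"
  shows "\<not> int p dvd m"
proof
  assume "int p dvd m"
  then have "nv (of_int m) < 1"
    using nv_of_int_le_inverse_p[of m] p_gt_1 by (simp add: le_less_trans)
  with assms(2) have "nv ((u - of_int m) + of_int m) < 1"
    by (rule nv_add_less)
  then show False
    using assms(1) by simp
qed

lemma not_dvd_denominator_if_nv_le_1:
  assumes nv_q: "nv (of_rat q) \<le> 1" and nd: "quotient_of q = (n, d)"
  shows "\<not> int p dvd d"
proof
  assume "int p dvd d"
  moreover have "\<not> is_unit (int p)"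
    using p_gt_1 by simp
  ultimately have "\<not> int p dvd n"
    using quotient_of_coprime[OF nd] coprime_common_divisor by blast
  then have "nv (of_rat q) = 1 / nv (of_int d :: 'a)"
    using quotient_of_div[OF nd] nv_of_int_eq_1 by (simp add: of_rat_divide nv_divide)
  moreover have "0 < nv (of_int d :: 'a)"
    using quotient_of_denom_pos[OF nd] nv_nonneg[of "of_int d"] nv_eq_0_iff[of "of_int d"] by auto
  moreover have "real p * nv (of_int d :: 'a) \<le> 1"
    using nv_of_int_le_inverse_p[OF \<open>int p dvd d\<close>] p_gt_1 by (simp add: field_simps)
  ultimately have "real p \<le> nv (of_rat q)"
    by (simp add: le_divide_eq)
  then show False
    using nv_q p_gt_1 by simp
qed

lemma integer_approximation_of_fraction:
  assumes "\<not> int p dvd d"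
  shows "\<exists>m::int. nv (of_int n / of_int d - of_int m) \<le> 1 / real p ^ k"
proof -
  have "d \<noteq> 0"
    using assms by auto
  have "coprime (int p) d"
    using prime assms by (simp add: prime_imp_coprime)
  then have "coprime d (int p ^ k)"
    by (simp add: coprime_commute)
  then obtain d' where "[d * d' = 1] (mod int p ^ k)"
    using cong_solve_coprime_int by blast
  then obtain t where t: "1 - d * d' = int p ^ k * t"
    by (metis cong_iff_dvd_diff cong_sym dvdE)
  have "of_int n / of_int d - of_int (n * d') = (of_int n * of_int (1 - d * d') / of_int d :: 'a)"
    using \<open>d \<noteq> 0\<close> by (simp add: field_simps)
  also have "\<dots> = of_int n * (of_nat p ^ k * of_int t) / of_int d"
    by (simp add: t)
  finally have "nv (of_int n / of_int d - of_int (n * d') :: 'a)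
      = 1 / real p ^ k * (nv (of_int n :: 'a) * nv (of_int t :: 'a))"
    using nv_of_int_eq_1[OF assms] by (simp add: nv_divide nv_mult nv_power nv_of_nat_p power_one_over)
  also have "\<dots> \<le> 1 / real p ^ k"
    by (rule mult_left_le) (simp_all add: mult_le_one nv_nonneg nv_of_int_le_1)
  finally show ?thesis ..
qed

lemma integer_approximation:
  assumes "nv x \<le> 1"
  shows "\<exists>m::int. nv (x - of_int m) \<le> 1 / real p ^ k"
proof -
  define \<epsilon> where "\<epsilon> = 1 / real p ^ k"
  have \<epsilon>: "0 < \<epsilon>" "\<epsilon> \<le> 1"
    using p_gt_1 by (simp_all add: \<epsilon>_def)
  obtain q where q: "nv (x - of_rat q) < \<epsilon>"
    using dense_rat[OF \<epsilon>(1)] by blast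
  have "nv (of_rat q) \<le> 1"
    using nv_diff_le[of x 1 "x - of_rat q"] q \<epsilon> assms by simp
  obtain n d where nd: "quotient_of q = (n, d)"
    by fastforce
  obtain m where m: "nv (of_int n / of_int d - of_int m :: 'a) \<le> \<epsilon>"
    using integer_approximation_of_fraction not_dvd_denominator_if_nv_le_1[OF \<open>nv (of_rat q) \<le> 1\<close> nd]
    unfolding \<epsilon>_def by blast
  have "of_rat q = (of_int n / of_int d :: 'a)"
    using quotient_of_div[OF nd] by (simp add: of_rat_divide)
  then have "x - of_int m = (x - of_rat q) + (of_int n / of_int d - of_int m)"
    by simp
  then have "nv (x - of_int m) \<le> \<epsilon>"
    using nv_add_le[OF less_imp_le[OF q] m] by (simp only:)
  then show ?thesis
    by (auto simp: \<epsilon>_def)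
qed

lemma unit_close_to_1_if_p_2:
  assumes p: "p = 2" and u: "nv u = 1"
  shows "nv (u - 1) < 1"
proof -
  obtain m where m: "nv (u - of_int m) \<le> 1 / 2"
    using integer_approximation[of u 1] u p by auto
  then have "odd m"
    using not_dvd_if_close_to_unit[OF u, of m] p by simp
  then have "nv (of_int (m - 1) :: 'a) \<le> 1 / 2"
    using nv_of_int_le_inverse_p[of "m - 1"] p by simp
  then have "nv ((u - of_int m) + of_int (m - 1)) \<le> 1 / 2"
    using m by (intro nv_add_le)
  then show ?thesis
    by simp
qed

lemma unit_square_close_to_1_if_p_2:
  assumes p: "p = 2" and u: "nv u = 1"
  shows "nv (u ^ 2 - 1) \<le> 1 / 8"
proof -
  have nv_2: "nv (2 :: 'a) = 1 / 2"
    using nv_of_nat_p p by simp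
  have "nv (8 :: 'a) = nv (2 :: 'a) ^ 3"
    using nv_power[of "2 :: 'a" 3] by simp
  also have "\<dots> = 1 / 8"
    by (simp add: nv_2 power_one_over)
  finally have nv_8: "nv (8 :: 'a) = 1 / 8" .
  obtain m where m: "nv (u - of_int m) \<le> 1 / 8"
    using integer_approximation[of u 3] u p by auto
  then have "odd m"
    using not_dvd_if_close_to_unit[OF u, of m] p by simp
  then obtain j where j: "m ^ 2 - 1 = 8 * j"
    using eight_dvd_odd_square_minus_1 by blast
  have "nv (of_int (m ^ 2 - 1) :: 'a) = nv (8 :: 'a) * nv (of_int j :: 'a)"
    unfolding j by (simp add: nv_mult)
  also have "\<dots> \<le> 1 / 8"
    unfolding nv_8 using nv_of_int_le_1[of j] by simp
  finally have "nv (of_int (m ^ 2 - 1) :: 'a) \<le> 1 / 8" .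
  moreover have "nv ((u + of_int m) * (u - of_int m)) \<le> 1 / 8"
    using u nv_of_int_le_1[of m] m by (intro nv_mult_le nv_add_le) simp_all
  ultimately have "nv ((u + of_int m) * (u - of_int m) + of_int (m ^ 2 - 1)) \<le> 1 / 8"
    by (intro nv_add_le)
  moreover have "u ^ 2 - 1 = (u + of_int m) * (u - of_int m) + of_int (m ^ 2 - 1)"
    by (simp add: algebra_simps power2_eq_square)
  ultimately show ?thesis
    by (simp only:)
qed

lemma no_sqrt_neg3_if_p_2:
  fixes y :: 'a
  assumes p: "p = 2"
  shows "y ^ 2 \<noteq> - 3"
proof
  assume y: "y ^ 2 = - 3"
  have "nv (y ^ 2) = 1"
    using y nv_numeral_eq_1 p by simp
  then have close: "nv (y ^ 2 - 1) \<le> 1 / 8"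
    using unit_square_close_to_1_if_p_2[OF p] nv_eq_1_if_nv_square by blast
  have "y ^ 2 - 1 = - (2 * 2)"
    using y by simp
  then have "nv (y ^ 2 - 1) = nv (2 :: 'a) * nv 2"
    by (simp only: nv_minus nv_mult)
  moreover have "nv (2 :: 'a) = 1 / 2"
    using nv_of_nat_p p by simp
  ultimately show False
    using close by simp
qed

end

section \<open>Siegel discs\<close>

lemma siegel_disc_iff_spheres_invariant:
  "siegel_disc nv f x0 r \<longleftrightarrow>
     f x0 = x0 \<and> (\<forall>\<rho><r. \<forall>x\<in>psphere nv \<rho> x0. f x \<in> psphere nv \<rho> x0)"
proof
  assume "siegel_disc nv f x0 r"
  moreover have "(f ^^ 1) x = f x" for x
    by simp
  ultimately show "f x0 = x0 \<and> (\<forall>\<rho><r. \<forall>x\<in>psphere nv \<rho> x0. f x \<in> psphere nv \<rho> x0)"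
    unfolding siegel_disc_def by (metis order_refl)
next
  assume *: "f x0 = x0 \<and> (\<forall>\<rho><r. \<forall>x\<in>psphere nv \<rho> x0. f x \<in> psphere nv \<rho> x0)"
  have "(f ^^ n) x \<in> psphere nv \<rho> x0" if "\<rho> < r" "x \<in> psphere nv \<rho> x0" for \<rho> x n
    using that * by (induction n) auto
  then show "siegel_disc nv f x0 r"
    unfolding siegel_disc_def using * by blast
qed

lemma pball_subset_SI: "siegel_disc nv f x0 r \<Longrightarrow> pball nv r x0 \<subseteq> SI nv f x0"
  unfolding SI_def by blast

context padic_field
begin

lemma SI_eq_unit_ball_iff:
  assumes fixed: "f x0 = x0"
    and inner: "\<And>\<rho> x. \<rho> < 1 \<Longrightarrow> x \<in> psphere nv \<rho> x0 \<Longrightarrow> f x \<in> psphere nv \<rho> x0"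
  shows "SI nv f x0 = pball nv 1 x0 \<longleftrightarrow> (\<exists>x\<in>psphere nv 1 x0. f x \<notin> psphere nv 1 x0)"
proof
  assume SI: "SI nv f x0 = pball nv 1 x0"
  show "\<exists>x\<in>psphere nv 1 x0. f x \<notin> psphere nv 1 x0"
  proof (rule ccontr)
    assume "\<not> ?thesis"
    then have unit: "f x \<in> psphere nv 1 x0" if "x \<in> psphere nv 1 x0" for x
      using that by blast
    have "siegel_disc nv f x0 (real p)"
      unfolding siegel_disc_iff_spheres_invariant
    proof (intro conjI fixed allI impI ballI)
      fix \<rho> x
      assume "\<rho> < real p" and x: "x \<in> psphere nv \<rho> x0"
      then have "\<rho> \<le> 1"
        using nv_le_1_if_less_p[of "x - x0"] unfolding psphere_def by simp
      then show "f x \<in> psphere nv \<rho> x0"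
        using inner unit x by (cases "\<rho> < 1") auto
    qed
    then have "x0 + 1 \<in> SI nv f x0"
      using pball_subset_SI p_gt_1 unfolding pball_def by fastforce
    then show False
      using SI unfolding pball_def by simp
  qed
next
  assume escape: "\<exists>x\<in>psphere nv 1 x0. f x \<notin> psphere nv 1 x0"
  have "siegel_disc nv f x0 1"
    using fixed inner by (simp add: siegel_disc_iff_spheres_invariant)
  then have "pball nv 1 x0 \<subseteq> SI nv f x0"
    by (rule pball_subset_SI)
  moreover have "r \<le> 1" if "siegel_disc nv f x0 r" for r
    using that escape by (force simp: siegel_disc_iff_spheres_invariant)
  then have "SI nv f x0 \<subseteq> pball nv 1 x0"
    unfolding SI_def pball_def by fastforce
  ultimately show "SI nv f x0 = pball nv 1 x0"
    by blast
qed

end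

section \<open>The cubic map \<open>x\<^sup>3 + a x\<^sup>2\<close>\<close>

lemma square_plus_mult_eq_1_if_quadratic_formula:
  fixes a s x :: "'a::field_char_0"
  assumes s: "s ^ 2 = a ^ 2 + 4" and x: "x = (- a + s) / 2 \<or> x = (- a - s) / 2"
  shows "x ^ 2 + a * x = 1"
proof -
  from x have "2 * x + a = s \<or> 2 * x + a = - s"
  proof
    assume "x = (- a + s) / 2"
    then have "2 * x + a = s"
      by (simp add: field_simps)
    then show ?thesis ..
  next
    assume "x = (- a - s) / 2"
    then have "2 * x + a = - s"
      by (simp add: field_simps eq_neg_iff_add_eq_0)
    then show ?thesis ..
  qed
  then have "(2 * x + a) ^ 2 = s ^ 2"
    by auto
  then have "(2 * x + a) ^ 2 = a ^ 2 + 4"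
    using s by simp
  then have "4 * (x ^ 2 + a * x) = 4 * 1"
    by (simp add: algebra_simps power2_eq_square)
  then show ?thesis
    by (rule mult_left_cancel[THEN iffD1, rotated]) simp
qed

locale cubic_fixed_point = padic_field nv p for nv :: "'a::field_char_0 \<Rightarrow> real" and p +
  fixes a xs :: 'a
  assumes p_ne_3: "p \<noteq> 3" and nv_a: "nv a < 1" and fixed_point_eq: "xs ^ 2 + a * xs = 1"
begin

abbreviation cubic :: "'a \<Rightarrow> 'a" where
  "cubic \<equiv> \<lambda>x. x ^ 3 + a * x ^ 2"

abbreviation quad :: "'a \<Rightarrow> 'a" where
  "quad h \<equiv> h ^ 2 + 3 * xs * h + 3"

abbreviation multiplier :: "'a \<Rightarrow> 'a" where
  "multiplier h \<equiv> quad h + a * (h - xs)"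

lemma nv_3: "nv 3 = 1"
proof (rule nv_numeral_eq_1)
  show "\<not> p dvd 3"
  proof
    assume "p dvd 3"
    then have "p \<le> 3"
      by (simp add: dvd_imp_le)
    then have "p = 2"
      using prime_ge_2_nat[OF prime] p_ne_3 by linarith
    with \<open>p dvd 3\<close> show False
      by simp
  qed
qed

lemma nv_xs: "nv xs = 1"
  using nv_eq_1_if_square_plus_mult_eq_1[OF fixed_point_eq nv_a] .

lemma nv_3_xs: "nv (3 * xs) = 1"
  by (simp add: nv_mult nv_3 nv_xs)

lemma cubic_fixed: "cubic xs = xs"
proof -
  have "cubic xs = xs * (xs ^ 2 + a * xs)"
    by (simp add: algebra_simps power2_eq_square power3_eq_cube)
  then show ?thesis
    by (simp add: fixed_point_eq)
qed

lemma cubic_minus_fixed: "cubic x - xs = (x - xs) * multiplier (x - xs)"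
proof -
  have "cubic x - xs - (x - xs) * multiplier (x - xs) = (xs ^ 2 + a * xs - 1) * (3 * x - 2 * xs)"
    by (simp add: algebra_simps power2_eq_square power3_eq_cube)
  then show ?thesis
    by (simp add: fixed_point_eq)
qed

lemma nv_multiplier_minus_quad: "nv h \<le> 1 \<Longrightarrow> nv (multiplier h - quad h) < 1"
  using nv_mult_le[of "h - xs" a "nv a"] nv_diff_le[of h 1 xs] nv_xs nv_a
  by (simp add: mult.commute)

lemma cubic_preserves_inner_spheres:
  assumes "\<rho> < 1" and "x \<in> psphere nv \<rho> xs"
  shows "cubic x \<in> psphere nv \<rho> xs"
proof -
  have h: "nv (x - xs) = \<rho>"
    using assms(2) unfolding psphere_def by simp
  then have "nv (quad (x - xs)) = 1"
    using nv_monic_quadratic_eq_1[of "3 * xs" 3 "x - xs"] nv_3_xs nv_3 assms(1) by simp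
  moreover have "nv (multiplier (x - xs) - quad (x - xs)) < 1"
    using h assms(1) by (intro nv_multiplier_minus_quad) simp
  ultimately have "nv (multiplier (x - xs)) = 1"
    using nv_eq_if_close[of "multiplier (x - xs)" "quad (x - xs)"] by simp
  then show ?thesis
    using h cubic_minus_fixed[of x] unfolding psphere_def by (simp add: nv_mult)
qed

lemma cubic_leaves_unit_sphere_iff:
  assumes "nv h = 1"
  shows "cubic (xs + h) \<notin> psphere nv 1 xs \<longleftrightarrow> nv (quad h) < 1"
proof -
  have close: "nv (multiplier h - quad h) < 1"
    using assms by (intro nv_multiplier_minus_quad) simp
  have "nv (quad h) \<le> 1"
    using nv_monic_quadratic_le_1[of "3 * xs" 3 h] nv_3_xs nv_3 assms by simp
  then have "nv (multiplier h) \<le> 1"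
    using close nv_add_le[of "quad h" 1 "multiplier h - quad h"] by simp
  moreover have "nv (cubic (xs + h) - xs) = nv (multiplier h)"
    using cubic_minus_fixed[of "xs + h"] assms by (simp add: nv_mult)
  ultimately show ?thesis
    using nv_less_1_iff_if_close[OF close] unfolding psphere_def by auto
qed

lemma SI_eq_unit_ball_iff_unit_root:
  "SI nv cubic xs = pball nv 1 xs \<longleftrightarrow> (\<exists>\<gamma>. nv \<gamma> = 1 \<and> nv (quad \<gamma>) < 1)"
proof -
  have "(\<exists>x\<in>psphere nv 1 xs. cubic x \<notin> psphere nv 1 xs) \<longleftrightarrow> (\<exists>\<gamma>. nv \<gamma> = 1 \<and> nv (quad \<gamma>) < 1)"
  proof
    assume "\<exists>x\<in>psphere nv 1 xs. cubic x \<notin> psphere nv 1 xs"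
    then obtain x where "nv (x - xs) = 1" and "cubic (xs + (x - xs)) \<notin> psphere nv 1 xs"
      unfolding psphere_def by auto
    then show "\<exists>\<gamma>. nv \<gamma> = 1 \<and> nv (quad \<gamma>) < 1"
      using cubic_leaves_unit_sphere_iff by blast
  next
    assume "\<exists>\<gamma>. nv \<gamma> = 1 \<and> nv (quad \<gamma>) < 1"
    then obtain \<gamma> where "nv \<gamma> = 1" and "nv (quad \<gamma>) < 1"
      by blast
    moreover have "xs + \<gamma> \<in> psphere nv 1 xs"
      using \<open>nv \<gamma> = 1\<close> unfolding psphere_def by simp
    ultimately show "\<exists>x\<in>psphere nv 1 xs. cubic x \<notin> psphere nv 1 xs"
      using cubic_leaves_unit_sphere_iff by blast
  qed
  then show ?thesis
    using SI_eq_unit_ball_iff[of cubic xs] cubic_fixed cubic_preserves_inner_spheres by simp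
qed

lemma quad_completed_square: "(2 * \<gamma> + 3 * xs) ^ 2 + 3 = 4 * quad \<gamma> - 9 * (a * xs)"
proof -
  have "(2 * \<gamma> + 3 * xs) ^ 2 + 3 - (4 * quad \<gamma> - 9 * (a * xs)) = 9 * (xs ^ 2 + a * xs - 1)"
    by (simp add: algebra_simps power2_eq_square)
  also have "\<dots> = 0"
    by (simp add: fixed_point_eq)
  finally show ?thesis
    by (rule right_minus_eq[THEN iffD1])
qed

lemma completed_square_less_1_iff:
  assumes "p \<noteq> 2"
  shows "nv ((2 * \<gamma> + 3 * xs) ^ 2 + 3) < 1 \<longleftrightarrow> nv (quad \<gamma>) < 1"
proof -
  have "nv (4 * quad \<gamma>) = nv (quad \<gamma>)"
    using nv_2_if_p_ne_2[OF assms] nv_mult[of 2 2] by (intro nv_mult_unit_left) simp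
  moreover have "nv (9 * (a * xs)) < 1"
    using nv_mult_le[of 9 "a * xs" "nv a"] nv_of_int_le_1[of 9] nv_a nv_xs by (simp add: nv_mult)
  then have "nv (((2 * \<gamma> + 3 * xs) ^ 2 + 3) - 4 * quad \<gamma>) < 1"
    unfolding quad_completed_square by simp
  ultimately show ?thesis
    using nv_less_1_iff_if_close by metis
qed

lemma sqrt_neg3_if_unit_root:
  assumes "p \<noteq> 2" and "nv (quad \<gamma>) < 1"
  shows "\<exists>y::'a. y ^ 2 = - 3"
  using hensel_sqrt[OF nv_2_if_p_ne_2[OF assms(1)], of "- 3" "2 * \<gamma> + 3 * xs"] nv_3
    completed_square_less_1_iff[OF assms(1)] assms(2) by simp

lemma unit_root_if_sqrt_neg3:
  fixes y :: 'a
  assumes "p \<noteq> 2" and y: "y ^ 2 = - 3"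
  shows "\<exists>\<gamma>. nv \<gamma> = 1 \<and> nv (quad \<gamma>) < 1"
proof -
  define \<gamma> where "\<gamma> = (y - 3 * xs) / 2"
  have "2 * \<gamma> = y - 3 * xs"
    by (simp add: \<gamma>_def)
  then have "(2 * \<gamma> + 3 * xs) ^ 2 + 3 = 0"
    using y by simp
  then have root: "nv (quad \<gamma>) < 1"
    using completed_square_less_1_iff[OF assms(1), of \<gamma>] by simp
  then have "nv \<gamma> = 1"
    using nv_eq_1_if_monic_quadratic_less_1[of "3 * xs" 3 \<gamma>] nv_3_xs nv_3 by simp
  with root show ?thesis
    by blast
qed

lemma nv_quad_eq_1_if_p_2:
  assumes p: "p = 2" and \<gamma>: "nv \<gamma> = 1"
  shows "nv (quad \<gamma>) = 1"
proof -
  have "nv (\<gamma> ^ 2 - 1) < 1"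
    using unit_close_to_1_if_p_2[OF p] \<gamma> by (simp add: nv_power)
  moreover have "nv (3 * (xs * \<gamma> - 1)) < 1"
    using unit_close_to_1_if_p_2[OF p, of "xs * \<gamma>"] nv_mult_unit_left[OF nv_3, of "xs * \<gamma> - 1"]
      nv_xs \<gamma> by (simp add: nv_mult)
  ultimately have "nv ((\<gamma> ^ 2 - 1) + 3 * (xs * \<gamma> - 1)) < 1"
    by (rule nv_add_less)
  moreover have "nv (7 :: 'a) = 1"
    using nv_numeral_eq_1 p by simp
  ultimately have "nv ((\<gamma> ^ 2 - 1) + 3 * (xs * \<gamma> - 1) + 7) = 1"
    using nv_add_right_dominant[of "(\<gamma> ^ 2 - 1) + 3 * (xs * \<gamma> - 1)" 7] by presburger
  moreover have "quad \<gamma> = (\<gamma> ^ 2 - 1) + 3 * (xs * \<gamma> - 1) + 7"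
    by (simp add: algebra_simps)
  ultimately show ?thesis
    by (simp only:)
qed

lemma unit_root_iff_sqrt_neg3: "(\<exists>\<gamma>. nv \<gamma> = 1 \<and> nv (quad \<gamma>) < 1) \<longleftrightarrow> (\<exists>y::'a. y ^ 2 = - 3)"
proof (cases "p = 2")
  case True
  then show ?thesis
    using nv_quad_eq_1_if_p_2 no_sqrt_neg3_if_p_2 by auto
next
  case False
  then show ?thesis
    using sqrt_neg3_if_unit_root unit_root_if_sqrt_neg3 by blast
qed

end

theorem lemma4p5:
  fixes p :: nat and nv :: "'a::field_char_0 \<Rightarrow> real" and a s xs :: 'a
  assumes "prime p" and "p \<noteq> 3"
    and "is_Qp p nv"
    and "nv a < 1"
    and "s ^ 2 = a ^ 2 + 4"
    and "xs = (- a + s) / 2 \<or> xs = (- a - s) / 2"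
  shows "(SI nv (\<lambda>x. x ^ 3 + a * x ^ 2) xs = pball nv 1 xs
            \<longleftrightarrow> (\<exists>\<gamma>. nv \<gamma> = 1 \<and> nv (\<gamma> ^ 2 + 3 * xs * \<gamma> + 3) < 1))
       \<and> ((\<exists>\<gamma>. nv \<gamma> = 1 \<and> nv (\<gamma> ^ 2 + 3 * xs * \<gamma> + 3) < 1)
            \<longleftrightarrow> (\<exists>y::'a. y ^ 2 = - 3))"
proof -
  interpret padic_field nv p
    by (rule padic_field_if_is_Qp[OF assms(3,1)])
  interpret cubic_fixed_point nv p a xs
    using assms(2,4) square_plus_mult_eq_1_if_quadratic_formula[OF assms(5,6)]
    by unfold_locales
  show ?thesis
    using SI_eq_unit_ball_iff_unit_root unit_root_iff_sqrt_neg3 by blast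
qed

end
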